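(* Let $(X,\preceq,T)$ be a complete quasi-total triple, let $x_0\in X$ and set $H_n:=\{x\in X: x\succeq T^n.x_0\}$ for $n\in\mathbb{Z}$. Then $(X,\preceq,\{H_n\})$ is a half-space order. Moreover, if a group $G$ acts dominatingly and effectively by automorphisms on $(X,\preceq,T)$, then it acts unboundedly and by quasi-automorphisms on $(X,\preceq,\{H_n\})$; in particular, the order induced by $\preceq$ on $G$ is a quasi-total order.
   Context: For a poset $(X,\preceq)$, an order-preserving bijection $T$ of $X$ is dominant if for all $a,b\in X$ there is $n\in\mathbb{N}$ with $T^na\succ b$. A quasi-total triple is $(X,\preceq,T)$ with $(X,\preceq)$ a poset and $T$ a dominant order-preserving bijection such that there is $N\in\mathbb{N}$ with: for all $a,b\in X$ there exists $k\in\{0,\dots,N\}$ with $a\preceq T^kb$ or $b\preceq T^ka$. It is complete if $a\preceq Ta$ for all $a$. An action of $G$ on $(X,\preceq,T)$ by automorphisms is an action by order-preserving bijections commuting with $T$; it is dominating if moreover there exist $g\in G$, $x\in X$, $n\in\mathbb{N}$ with $g.x\succeq T^n.x$. A half-space filtration of $X$: subsets $\{H_n\}_{n\in\mathbb{Z}}$ with $H_{n+1}\subsetneq H_n$, $\bigcap H_n=\emptyset$, $\bigcup H_n=X$; height $h(a)=\sup\{n: a\in H_n\}$, $h(a,b)=h(a)-h(b)$. $(X,\preceq,\{H_n\})$ is a half-space order if $(X,\preceq)$ is a poset, $\{H_n\}$ is a half-space filtration and for some $w$, $h(a,b)\geq w\Rightarrow a\succeq b$. A $G$-action is by quasi-automorphisms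 if for some $d$, $|h(ga,gb)-h(a,b)|\leq d$ for all $g,a,b$; unbounded if for some $g,a$, $h(g^na)\to\pm\infty$ as $n\to\pm\infty$. For an effective action, the induced order on $G$ is $g\leq h\Leftrightarrow\forall k\in G\,\forall x:(kg).x\preceq(kh).x$. A quasi-total order is an order on $G$ induced by an effective, unbounded action by quasi-automorphisms on a half-space order. *)

theory Defs
  imports "HOL-Algebra.Group"
begin

definition poset :: "('a \<Rightarrow> 'a \<Rightarrow> bool) \<Rightarrow> bool" where
  "poset leq \<longleftrightarrow> (\<forall>a. leq a a) \<and> (\<forall>a b c. leq a b \<longrightarrow> leq b c \<longrightarrow> leq a c)
     \<and> (\<forall>a b. leq a b \<longrightarrow> leq b a \<longrightarrow> a = b)"

definition strict :: "('a \<Rightarrow> 'a \<Rightarrow> bool) \<Rightarrow> 'a \<Rightarrow> 'a \<Rightarrow> bool" where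
  "strict leq a b \<longleftrightarrow> leq a b \<and> a \<noteq> b"

definition tpow :: "('a \<Rightarrow> 'a) \<Rightarrow> int \<Rightarrow> 'a \<Rightarrow> 'a" where
  "tpow T n = (if 0 \<le> n then T ^^ nat n else Hilbert_Choice.inv T ^^ nat (- n))"

definition order_aut :: "('a \<Rightarrow> 'a \<Rightarrow> bool) \<Rightarrow> ('a \<Rightarrow> 'a) \<Rightarrow> bool" where
  "order_aut leq f \<longleftrightarrow> bij f \<and> (\<forall>a b. leq a b \<longleftrightarrow> leq (f a) (f b))"

definition dominant :: "('a \<Rightarrow> 'a \<Rightarrow> bool) \<Rightarrow> ('a \<Rightarrow> 'a) \<Rightarrow> bool" where
  "dominant leq T \<longleftrightarrow> order_aut leq T \<and> (\<forall>a b. \<exists>n::nat. strict leq b ((T ^^ n) a))"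

definition quasi_total_triple :: "('a \<Rightarrow> 'a \<Rightarrow> bool) \<Rightarrow> ('a \<Rightarrow> 'a) \<Rightarrow> bool" where
  "quasi_total_triple leq T \<longleftrightarrow> poset leq \<and> dominant leq T \<and>
     (\<exists>N::nat. \<forall>a b. \<exists>k\<le>N. leq a ((T ^^ k) b) \<or> leq b ((T ^^ k) a))"

definition complete_qt_triple :: "('a \<Rightarrow> 'a \<Rightarrow> bool) \<Rightarrow> ('a \<Rightarrow> 'a) \<Rightarrow> bool" where
  "complete_qt_triple leq T \<longleftrightarrow> quasi_total_triple leq T \<and> (\<forall>a. leq a (T a))"

definition group_action :: "('g, 'b) monoid_scheme \<Rightarrow> ('g \<Rightarrow> 'a \<Rightarrow> 'a) \<Rightarrow> bool" where
  "group_action G act \<longleftrightarrow> act \<one>\<^bsub>G\<^esub> = id \<and>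
     (\<forall>g\<in>carrier G. \<forall>h\<in>carrier G. act (g \<otimes>\<^bsub>G\<^esub> h) = act g \<circ> act h)"

definition aut_action :: "('g, 'b) monoid_scheme \<Rightarrow> ('g \<Rightarrow> 'a \<Rightarrow> 'a)
    \<Rightarrow> ('a \<Rightarrow> 'a \<Rightarrow> bool) \<Rightarrow> ('a \<Rightarrow> 'a) \<Rightarrow> bool" where
  "aut_action G act leq T \<longleftrightarrow> group_action G act \<and>
     (\<forall>g\<in>carrier G. order_aut leq (act g) \<and> act g \<circ> T = T \<circ> act g)"

definition dominating_action :: "('g, 'b) monoid_scheme \<Rightarrow> ('g \<Rightarrow> 'a \<Rightarrow> 'a)
    \<Rightarrow> ('a \<Rightarrow> 'a \<Rightarrow> bool) \<Rightarrow> ('a \<Rightarrow> 'a) \<Rightarrow> bool" where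
  "dominating_action G act leq T \<longleftrightarrow> aut_action G act leq T \<and>
     (\<exists>g\<in>carrier G. \<exists>x. \<exists>n::nat. n \<ge> 1 \<and> leq ((T ^^ n) x) (act g x))"

definition effective_action :: "('g, 'b) monoid_scheme \<Rightarrow> ('g \<Rightarrow> 'a \<Rightarrow> 'a) \<Rightarrow> bool" where
  "effective_action G act \<longleftrightarrow> (\<forall>g\<in>carrier G. act g = id \<longrightarrow> g = \<one>\<^bsub>G\<^esub>)"

definition half_space_filtration :: "(int \<Rightarrow> 'a set) \<Rightarrow> bool" where
  "half_space_filtration H \<longleftrightarrow> (\<forall>n. H (n + 1) \<subset> H n) \<and> (\<Inter>n. H n) = {} \<and> (\<Union>n. H n) = UNIV"

definition height :: "(int \<Rightarrow> 'a set) \<Rightarrow> 'a \<Rightarrow> int" where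
  "height H a = Sup {n. a \<in> H n}"

definition height2 :: "(int \<Rightarrow> 'a set) \<Rightarrow> 'a \<Rightarrow> 'a \<Rightarrow> int" where
  "height2 H a b = height H a - height H b"

definition half_space_order :: "('a \<Rightarrow> 'a \<Rightarrow> bool) \<Rightarrow> (int \<Rightarrow> 'a set) \<Rightarrow> bool" where
  "half_space_order leq H \<longleftrightarrow> poset leq \<and> half_space_filtration H \<and>
     (\<exists>w. \<forall>a b. height2 H a b \<ge> w \<longrightarrow> leq b a)"

definition quasi_aut_action :: "('g, 'b) monoid_scheme \<Rightarrow> ('g \<Rightarrow> 'a \<Rightarrow> 'a) \<Rightarrow> (int \<Rightarrow> 'a set) \<Rightarrow> bool" where
  "quasi_aut_action G act H \<longleftrightarrow> group_action G act \<and>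
     (\<exists>d. \<forall>g\<in>carrier G. \<forall>a b. \<bar>height2 H (act g a) (act g b) - height2 H a b\<bar> \<le> d)"

definition unbounded_action :: "('g, 'b) monoid_scheme \<Rightarrow> ('g \<Rightarrow> 'a \<Rightarrow> 'a) \<Rightarrow> (int \<Rightarrow> 'a set) \<Rightarrow> bool" where
  "unbounded_action G act H \<longleftrightarrow> (\<exists>g\<in>carrier G. \<exists>a.
     filterlim (\<lambda>n::int. height H (act (g [^]\<^bsub>G\<^esub> n) a)) at_top at_top \<and>
     filterlim (\<lambda>n::int. height H (act (g [^]\<^bsub>G\<^esub> n) a)) at_bot at_bot)"

definition induced_order :: "('g, 'b) monoid_scheme \<Rightarrow> ('g \<Rightarrow> 'a \<Rightarrow> 'a) \<Rightarrow> ('a \<Rightarrow> 'a \<Rightarrow> bool)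
    \<Rightarrow> 'g \<Rightarrow> 'g \<Rightarrow> bool" where
  "induced_order G act leq g h \<longleftrightarrow> (\<forall>k\<in>carrier G. \<forall>x. leq (act (k \<otimes>\<^bsub>G\<^esub> g) x) (act (k \<otimes>\<^bsub>G\<^esub> h) x))"

text \<open>A quasi-total order on G (with the half-space order living on the type 'a):
  a relation on carrier G induced by an effective, unbounded action by quasi-automorphisms
  on a half-space order.\<close>
definition quasi_total_order :: "'a itself \<Rightarrow> ('g, 'b) monoid_scheme \<Rightarrow> ('g \<Rightarrow> 'g \<Rightarrow> bool) \<Rightarrow> bool" where
  "quasi_total_order _ G R \<longleftrightarrow> (\<exists>(leq::'a \<Rightarrow> 'a \<Rightarrow> bool) H (act :: 'g \<Rightarrow> 'a \<Rightarrow> 'a).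
     half_space_order leq H \<and> group_action G act \<and> effective_action G act \<and>
     unbounded_action G act H \<and> quasi_aut_action G act H \<and>
     (\<forall>g\<in>carrier G. \<forall>h\<in>carrier G. R g h \<longleftrightarrow> induced_order G act leq g h))"

end

theory Submission
  imports Defs
begin

text \<open>Completeness makes the orbit \<open>T\<^sup>n x0\<close> increasing, so the sets \<open>H\<^sub>n\<close> decrease, and
  dominance puts every point into some but not every \<open>H\<^sub>n\<close>. By quasi-totality with constant \<open>N\<close>,
  a point outside \<open>H\<^sub>n\<close> lies below \<open>T\<^sup>n\<^sup>+\<^sup>2\<^sup>N x0\<close>; hence a height gap of \<open>2N+1\<close> forces
  comparability, and heights measured from two base points differ by at most \<open>2N+1\<close>. An
  automorphism \<open>g\<close> commuting with \<open>T\<close> preserves heights measured from the moved base point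
  \<open>g.x0\<close>, so it distorts height differences by at most \<open>2N+1\<close>. If \<open>T\<^sup>n x \<preceq> g.x\<close> with
  \<open>n \<ge> 1\<close>, then \<open>g\<^sup>k.x\<close> rises and \<open>g\<^sup>-\<^sup>k.x\<close> falls by at least \<open>k\<close> levels.\<close>

lemma tpow_0: "tpow T 0 = id"
  by (simp add: tpow_def)

lemma tpow_of_nat: "tpow T (int k) = T ^^ k"
  by (simp add: tpow_def)

lemma tpow_succ:
  assumes "bij T"
  shows "tpow T (n + 1) = T \<circ> tpow T n"
proof (cases "0 \<le> n")
  case True
  then have "nat (n + 1) = Suc (nat n)" by simp
  with True show ?thesis by (simp add: tpow_def)
next
  case False
  show ?thesis
  proof (cases "n = -1")
    case True
    with assms show ?thesis
      by (auto simp: tpow_def fun_eq_iff bij_is_surj surj_f_inv_f)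
  next
    case not_minus_one: False
    with False have "nat (- n) = Suc (nat (- (n + 1)))" by simp
    with False not_minus_one have "tpow T n = Hilbert_Choice.inv T \<circ> tpow T (n + 1)"
      by (simp add: tpow_def funpow_Suc_right[symmetric] del: funpow.simps) simp
    with assms show ?thesis
      by (auto simp: fun_eq_iff bij_is_surj surj_f_inv_f)
  qed
qed

lemma tpow_pred:
  assumes "bij T"
  shows "tpow T (n - 1) = Hilbert_Choice.inv T \<circ> tpow T n"
proof -
  have "tpow T n = T \<circ> tpow T (n - 1)"
    using tpow_succ[OF assms, of "n - 1"] by simp
  with assms show ?thesis by (auto simp: fun_eq_iff bij_is_inj inv_f_f)
qed

lemma tpow_add:
  assumes "bij T"
  shows "tpow T (m + n) = tpow T m \<circ> tpow T n"
proof (induction m rule: int_induct[where k = 0])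
  case base
  then show ?case by (simp add: tpow_0)
next
  case (step1 i)
  have "tpow T (i + 1 + n) = tpow T ((i + n) + 1)" by (simp add: algebra_simps)
  also have "\<dots> = T \<circ> tpow T (i + n)" by (rule tpow_succ[OF assms])
  finally show ?case using step1 tpow_succ[OF assms, of i] by (simp add: comp_assoc)
next
  case (step2 i)
  have "tpow T (i - 1 + n) = tpow T ((i + n) - 1)" by (simp add: algebra_simps)
  also have "\<dots> = Hilbert_Choice.inv T \<circ> tpow T (i + n)" by (rule tpow_pred[OF assms])
  finally show ?case using step2 tpow_pred[OF assms, of i] by (simp add: comp_assoc)
qed

lemma tpow_order_iff:
  assumes "order_aut leq T"
  shows "leq (tpow T n a) (tpow T n b) \<longleftrightarrow> leq a b"
proof -
  have bij: "bij T" and T_iff: "\<And>a b. leq a b \<longleftrightarrow> leq (T a) (T b)"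
    using assms by (auto simp: order_aut_def)
  have inv_iff: "leq (Hilbert_Choice.inv T a) (Hilbert_Choice.inv T b) \<longleftrightarrow> leq a b" for a b
    using T_iff[of "Hilbert_Choice.inv T a" "Hilbert_Choice.inv T b"] bij
    by (simp add: bij_is_surj surj_f_inv_f)
  show ?thesis
  proof (induction n arbitrary: a b rule: int_induct[where k = 0])
    case base
    then show ?case by (simp add: tpow_0)
  next
    case (step1 i)
    then show ?case using tpow_succ[OF bij, of i] T_iff by simp
  next
    case (step2 i)
    then show ?case using tpow_pred[OF bij, of i] inv_iff by simp
  qed
qed

lemma tpow_commute:
  assumes "bij T" and "f \<circ> T = T \<circ> f"
  shows "f (tpow T n a) = tpow T n (f a)"
proof -
  have T_comm: "f (T a) = T (f a)" for a
    using assms(2) by (metis comp_apply)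
  have inv_comm: "f (Hilbert_Choice.inv T a) = Hilbert_Choice.inv T (f a)" for a
  proof -
    have "T (f (Hilbert_Choice.inv T a)) = f a"
      using T_comm[of "Hilbert_Choice.inv T a"] assms(1) by (simp add: bij_is_surj surj_f_inv_f)
    with assms(1) show ?thesis by (metis bij_is_inj inv_f_f)
  qed
  show ?thesis
  proof (induction n arbitrary: a rule: int_induct[where k = 0])
    case base
    then show ?case by (simp add: tpow_0)
  next
    case (step1 i)
    then show ?case using tpow_succ[OF assms(1), of i] T_comm by simp
  next
    case (step2 i)
    then show ?case using tpow_pred[OF assms(1), of i] inv_comm by simp
  qed
qed

lemma funpow_commute_funpow:
  assumes "f \<circ> g = g \<circ> f"
  shows "(f ^^ k) ((g ^^ m) a) = (g ^^ m) ((f ^^ k) a)"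
proof -
  have "h ^^ k \<circ> g' = g' \<circ> h ^^ k" if "h \<circ> g' = g' \<circ> h" for h g' :: "'a \<Rightarrow> 'a" and k
    using that by (induction k) (simp_all add: comp_assoc, metis comp_assoc)
  from this[OF this[OF assms, symmetric], of m] show ?thesis
    by (metis comp_apply)
qed

lemma funpow_preserves_rel:
  assumes "\<And>a b. R a b \<Longrightarrow> R (f a) (f b)" and "R a b"
  shows "R ((f ^^ k) a) ((f ^^ k) b)"
  using assms(2) by (induction k) (simp_all add: assms(1))

lemma filterlim_at_top_int_linear_lower:
  fixes h :: "int \<Rightarrow> int"
  assumes "\<And>k. c + int k \<le> h (int k)"
  shows "filterlim h at_top at_top"
  unfolding filterlim_at_top eventually_at_top_linorder
proof
  fix z
  show "\<exists>N. \<forall>i\<ge>N. z \<le> h i"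
  proof (intro exI allI impI)
    fix i assume "max 0 (z - c) \<le> i"
    then show "z \<le> h i" using assms[of "nat i"] by simp
  qed
qed

lemma filterlim_at_bot_int_linear_upper:
  fixes h :: "int \<Rightarrow> int"
  assumes "\<And>k. h (- int k) + int k \<le> c"
  shows "filterlim h at_bot at_bot"
  unfolding filterlim_at_bot eventually_at_bot_linorder
proof
  fix z
  show "\<exists>N. \<forall>i\<le>N. h i \<le> z"
  proof (intro exI allI impI)
    fix i assume "i \<le> min 0 (z - c)"
    then show "h i \<le> z" using assms[of "nat (- i)"] by simp
  qed
qed

lemma group_action_nat_pow:
  assumes "group G" "group_action G act" "g \<in> carrier G"
  shows "act (g [^]\<^bsub>G\<^esub> (k::nat)) = act g ^^ k"
proof (induction k)
  case 0
  then show ?case using assms by (simp add: group_action_def)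
next
  case (Suc k)
  have "g [^]\<^bsub>G\<^esub> k \<in> carrier G" using assms by (simp add: group.is_monoid monoid.nat_pow_closed)
  with Suc assms show ?case
    by (simp add: group_action_def funpow_Suc_right del: funpow.simps)
qed

lemma group_action_int_pow_neg:
  assumes "group G" "group_action G act" "g \<in> carrier G"
  shows "act (g [^]\<^bsub>G\<^esub> (- int k)) = act (inv\<^bsub>G\<^esub> g) ^^ k"
  using group_action_nat_pow[OF assms(1,2), of "inv\<^bsub>G\<^esub> g"] assms
  by (simp add: group.int_pow_neg_int group.nat_pow_inv)

lemma group_action_inv_apply:
  assumes "group G" "group_action G act" "g \<in> carrier G"
  shows "act (inv\<^bsub>G\<^esub> g) (act g x) = x"
proof -
  have "act (inv\<^bsub>G\<^esub> g \<otimes>\<^bsub>G\<^esub> g) = act (inv\<^bsub>G\<^esub> g) \<circ> act g"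
    using assms by (simp add: group_action_def)
  moreover have "inv\<^bsub>G\<^esub> g \<otimes>\<^bsub>G\<^esub> g = \<one>\<^bsub>G\<^esub>" using assms by (simp add: group.l_inv)
  ultimately show ?thesis using assms(2) by (metis group_action_def id_apply comp_apply)
qed

locale complete_quasi_total =
  fixes leq :: "'a \<Rightarrow> 'a \<Rightarrow> bool" and T :: "'a \<Rightarrow> 'a"
  assumes complete_qt_triple: "complete_qt_triple leq T"
begin

lemma poset: "poset leq"
  using complete_qt_triple by (simp add: complete_qt_triple_def quasi_total_triple_def)

lemma leq_refl: "leq a a"
  using poset by (simp add: poset_def)

lemma leq_trans [trans]: "leq a b \<Longrightarrow> leq b c \<Longrightarrow> leq a c"
  using poset unfolding poset_def by blast

lemma leq_antisym: "leq a b \<Longrightarrow> leq b a \<Longrightarrow> a = b"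
  using poset unfolding poset_def by blast

lemma order_aut_T: "order_aut leq T"
  using complete_qt_triple
  by (simp add: complete_qt_triple_def quasi_total_triple_def dominant_def)

lemma bij_T: "bij T"
  using order_aut_T by (simp add: order_aut_def)

lemma dominant: "\<exists>n. strict leq b ((T ^^ n) a)"
  using complete_qt_triple
  by (simp add: complete_qt_triple_def quasi_total_triple_def dominant_def)

lemma leq_T: "leq a (T a)"
  using complete_qt_triple by (simp add: complete_qt_triple_def)

definition qt_bound :: nat where
  "qt_bound = (SOME N. \<forall>a b. \<exists>k\<le>N. leq a ((T ^^ k) b) \<or> leq b ((T ^^ k) a))"

lemma quasi_total: "\<exists>k\<le>qt_bound. leq a ((T ^^ k) b) \<or> leq b ((T ^^ k) a)"
proof -
  have "\<exists>N. \<forall>a b. \<exists>k\<le>N. leq a ((T ^^ k) b) \<or> leq b ((T ^^ k) a)"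
    using complete_qt_triple by (simp add: complete_qt_triple_def quasi_total_triple_def)
  from someI_ex[OF this] show ?thesis unfolding qt_bound_def by blast
qed

lemma tpow_leq_iff: "leq (tpow T n a) (tpow T n b) \<longleftrightarrow> leq a b"
  by (rule tpow_order_iff[OF order_aut_T])

lemma funpow_T_leq_iff: "leq ((T ^^ k) a) ((T ^^ k) b) \<longleftrightarrow> leq a b"
  using tpow_leq_iff[of "int k"] by (simp only: tpow_of_nat)

lemma tpow_add_apply: "tpow T (m + n) x = tpow T m (tpow T n x)"
  by (simp add: tpow_add bij_T)

lemma leq_funpow_T: "leq a ((T ^^ k) a)"
  by (induction k) (auto simp: leq_refl intro: leq_trans leq_T)

lemma tpow_mono: "m \<le> n \<Longrightarrow> leq (tpow T m a) (tpow T n a)"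
proof -
  assume "m \<le> n"
  then have "n = int (nat (n - m)) + m" by simp
  then have "tpow T n a = (T ^^ nat (n - m)) (tpow T m a)" by (metis tpow_add_apply tpow_of_nat)
  then show ?thesis by (simp add: leq_funpow_T)
qed

lemma tpow_leq_downward: "m \<le> n \<Longrightarrow> leq (tpow T n y) a \<Longrightarrow> leq (tpow T m y) a"
  using tpow_mono leq_trans by blast

lemma ex_tpow_leq: "\<exists>n. leq (tpow T n y) a"
proof -
  obtain m where "strict leq y ((T ^^ m) a)" using dominant by blast
  then have "leq y (tpow T (int m) a)" by (simp add: strict_def tpow_of_nat)
  then have "leq (tpow T (- int m) y) (tpow T (- int m) (tpow T (int m) a))"
    using tpow_leq_iff by blast
  then show ?thesis by (metis tpow_add_apply add.commute add.right_inverse tpow_0 id_apply)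
qed

lemma ex_tpow_not_leq: "\<exists>n. \<not> leq (tpow T n y) a"
proof -
  obtain m where "strict leq a ((T ^^ m) y)" using dominant by blast
  then have "\<not> leq (tpow T (int m) y) a" by (auto simp: strict_def tpow_of_nat dest: leq_antisym)
  then show ?thesis by blast
qed

lemma tpow_not_leq_self: "\<not> leq (tpow T (n + 1) y) (tpow T n y)"
proof
  assume "leq (tpow T (n + 1) y) (tpow T n y)"
  moreover have "tpow T (n + 1) y = tpow T n (T y)"
    using tpow_add_apply[of n 1 y] tpow_of_nat[of T 1] by simp
  ultimately have "leq (tpow T n (T y)) (tpow T n y)" by simp
  then have "T y = y" using tpow_leq_iff leq_T leq_antisym by blast
  then have "(T ^^ m) y = y" for m by (induction m) simp_all
  then show False using dominant[of y y] by (simp add: strict_def)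
qed

text \<open>Comparing \<open>b\<close> with \<open>T\<^sup>n\<^sup>+\<^sup>N y\<close> by quasi-totality: one alternative is the claim, the other
  would put \<open>T\<^sup>n y\<close> below \<open>b\<close>.\<close>
lemma leq_tpow_if_not_tpow_leq:
  assumes "\<not> leq (tpow T n y) b"
  shows "leq b (tpow T (n + 2 * int qt_bound) y)"
proof -
  let ?z = "tpow T (n + int qt_bound) y"
  obtain k where k: "k \<le> qt_bound" and cmp: "leq b ((T ^^ k) ?z) \<or> leq ?z ((T ^^ k) b)"
    using quasi_total by blast
  show ?thesis
  proof (cases "leq b ((T ^^ k) ?z)")
    case True
    have "(T ^^ k) ?z = tpow T (n + int qt_bound + int k) y"
      by (metis tpow_add_apply tpow_of_nat add.commute)
    moreover have "leq (tpow T (n + int qt_bound + int k) y) (tpow T (n + 2 * int qt_bound) y)"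
      using k by (intro tpow_mono) simp
    ultimately show ?thesis using True leq_trans by metis
  next
    case False
    then have "leq ?z (tpow T (int k) b)" using cmp by (simp add: tpow_of_nat)
    then have "leq (tpow T (- int k) ?z) (tpow T (- int k) (tpow T (int k) b))"
      using tpow_leq_iff by blast
    then have "leq (tpow T (n + int qt_bound - int k) y) b"
      by (metis tpow_add_apply add.commute add.right_inverse tpow_0 id_apply
          diff_conv_add_uminus add.assoc)
    then have "leq (tpow T n y) b" using tpow_leq_downward[of n "n + int qt_bound - int k"] k by simp
    with assms show ?thesis by simp
  qed
qed

definition half_spaces :: "'a \<Rightarrow> int \<Rightarrow> 'a set" where
  "half_spaces y = (\<lambda>n. {x. leq (tpow T n y) x})"

lemma height_half_spaces: "height (half_spaces y) a = Sup {n. leq (tpow T n y) a}"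
  by (simp add: height_def half_spaces_def)

lemma bdd_above_half_spaces: "bdd_above {n. leq (tpow T n y) a}"
proof -
  obtain n0 where n0: "\<not> leq (tpow T n0 y) a" using ex_tpow_not_leq by blast
  have "n \<le> n0" if "leq (tpow T n y) a" for n
    using tpow_leq_downward[of n0 n y a] that n0 by fastforce
  then show ?thesis by (auto simp: bdd_above_def)
qed

lemma height_ge: "leq (tpow T n y) a \<Longrightarrow> n \<le> height (half_spaces y) a"
  unfolding height_half_spaces by (rule cSup_upper) (auto simp: bdd_above_half_spaces)

lemma tpow_height_leq: "leq (tpow T (height (half_spaces y) a) y) a"
proof (rule ccontr)
  let ?h = "height (half_spaces y) a"
  assume not_leq: "\<not> leq (tpow T ?h y) a"
  have "n \<le> ?h - 1" if "leq (tpow T n y) a" for n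
    using height_ge[OF that] not_leq that by (cases "n = ?h") auto
  then have "?h \<le> ?h - 1"
    using ex_tpow_leq[of y a] unfolding height_half_spaces[of y a] by (intro cSup_least) auto
  then show False by simp
qed

lemma not_tpow_height_succ_leq: "\<not> leq (tpow T (height (half_spaces y) a + 1) y) a"
  using height_ge[of "height (half_spaces y) a + 1" y a] by auto

lemma leq_tpow_height: "leq a (tpow T (height (half_spaces y) a + 1 + 2 * int qt_bound) y)"
  using leq_tpow_if_not_tpow_leq[OF not_tpow_height_succ_leq] .

lemma height_mono: "leq a b \<Longrightarrow> height (half_spaces y) a \<le> height (half_spaces y) b"
  using tpow_height_leq[of y a] leq_trans height_ge by blast

lemma height_funpow_T: "height (half_spaces y) a + int k \<le> height (half_spaces y) ((T ^^ k) a)"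
proof -
  have "leq (tpow T (int k) (tpow T (height (half_spaces y) a) y)) (tpow T (int k) a)"
    using tpow_height_leq tpow_leq_iff by blast
  then have "leq (tpow T (height (half_spaces y) a + int k) y) ((T ^^ k) a)"
    by (metis tpow_add_apply tpow_of_nat add.commute)
  then show ?thesis by (rule height_ge)
qed

lemma height_change_base:
  "height (half_spaces x) y + height (half_spaces y) a \<le> height (half_spaces x) a"
  "height (half_spaces x) a
     \<le> height (half_spaces x) y + height (half_spaces y) a + 1 + 2 * int qt_bound"
proof -
  have "leq (tpow T (height (half_spaces y) a) (tpow T (height (half_spaces x) y) x))
      (tpow T (height (half_spaces y) a) y)"
    using tpow_height_leq tpow_leq_iff by blast
  then have "leq (tpow T (height (half_spaces x) y + height (half_spaces y) a) x) a"
    using tpow_height_leq leq_trans by (metis tpow_add_apply add.commute)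
  then show "height (half_spaces x) y + height (half_spaces y) a \<le> height (half_spaces x) a"
    by (rule height_ge)
next
  let ?c = "height (half_spaces x) y + 1 + 2 * int qt_bound"
  let ?d = "height (half_spaces x) a - ?c"
  have "leq (tpow T ?d y) (tpow T ?d (tpow T ?c x))"
    using leq_tpow_height tpow_leq_iff by blast
  then have "leq (tpow T ?d y) a"
    using tpow_height_leq[of x a] leq_trans by (metis tpow_add_apply diff_add_cancel)
  then have "?d \<le> height (half_spaces y) a" by (rule height_ge)
  then show "height (half_spaces x) a
      \<le> height (half_spaces x) y + height (half_spaces y) a + 1 + 2 * int qt_bound"
    by simp
qed

lemma height_order_aut:
  assumes "order_aut leq f" and "f \<circ> T = T \<circ> f"
  shows "height (half_spaces (f y)) (f a) = height (half_spaces y) a"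
proof -
  have "leq (tpow T n (f y)) (f a) \<longleftrightarrow> leq (f (tpow T n y)) (f a)" for n
    by (simp add: tpow_commute[OF bij_T assms(2)])
  also have "\<dots> n \<longleftrightarrow> leq (tpow T n y) a" for n
    using assms(1) by (simp add: order_aut_def)
  finally have "leq (tpow T n (f y)) (f a) \<longleftrightarrow> leq (tpow T n y) a" for n .
  then show ?thesis by (simp add: height_half_spaces)
qed

lemma half_space_order: "half_space_order leq (half_spaces y)"
  unfolding half_space_order_def
proof (intro conjI exI allI impI)
  show "poset leq" by (rule poset)
  show "half_space_filtration (half_spaces y)"
    unfolding half_space_filtration_def
  proof (intro conjI allI)
    show "half_spaces y (n + 1) \<subset> half_spaces y n" for n
      using tpow_leq_downward[of n "n + 1" y] tpow_not_leq_self[of n y] leq_refl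
      by (auto simp: half_spaces_def)
    show "(\<Inter>n. half_spaces y n) = {}" using ex_tpow_not_leq by (auto simp: half_spaces_def)
    show "(\<Union>n. half_spaces y n) = UNIV" using ex_tpow_leq by (auto simp: half_spaces_def)
  qed
next
  fix a b assume "1 + 2 * int qt_bound \<le> height2 (half_spaces y) a b"
  then have "height (half_spaces y) b + 1 + 2 * int qt_bound \<le> height (half_spaces y) a"
    by (simp add: height2_def)
  then have "leq (tpow T (height (half_spaces y) b + 1 + 2 * int qt_bound) y)
      (tpow T (height (half_spaces y) a) y)"
    by (rule tpow_mono)
  then show "leq b a" using leq_tpow_height tpow_height_leq leq_trans by blast
qed

lemma quasi_aut_action:
  assumes "aut_action G act leq T"
  shows "quasi_aut_action G act (half_spaces y)"
  unfolding quasi_aut_action_def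
proof (intro conjI exI ballI allI)
  show "group_action G act" using assms by (simp add: aut_action_def)
next
  fix g a b assume g: "g \<in> carrier G"
  have aut: "order_aut leq (act g)" "act g \<circ> T = T \<circ> act g"
    using assms g by (auto simp: aut_action_def)
  have "height (half_spaces y) (act g y) + height (half_spaces y) a \<le> height (half_spaces y) (act g a)
      \<and> height (half_spaces y) (act g a)
          \<le> height (half_spaces y) (act g y) + height (half_spaces y) a + 1 + 2 * int qt_bound" for a
    using height_change_base[where x = y and y = "act g y" and a = "act g a"] height_order_aut[OF aut, of y a] by simp
  from this[of a] this[of b]
  show "\<bar>height2 (half_spaces y) (act g a) (act g b) - height2 (half_spaces y) a b\<bar>
      \<le> 1 + 2 * int qt_bound"
    by (simp add: height2_def abs_le_iff)
qed

lemma height_funpow_ge: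
  assumes mono: "\<And>a b. leq a b \<Longrightarrow> leq (f a) (f b)" and comm: "f \<circ> T = T \<circ> f"
    and "1 \<le> n" and step: "leq ((T ^^ n) x) (f x)"
  shows "height (half_spaces y) x + int k \<le> height (half_spaces y) ((f ^^ k) x)"
proof -
  have "leq ((T ^^ (n * k)) x) ((f ^^ k) x)"
  proof (induction k)
    case 0
    then show ?case by (simp add: leq_refl)
  next
    case (Suc k)
    have "(T ^^ (n * Suc k)) x = (T ^^ (n * k)) ((T ^^ n) x)"
      by (metis funpow_add comp_apply mult_Suc_right add.commute)
    also have "leq \<dots> ((T ^^ (n * k)) (f x))"
      using step funpow_T_leq_iff by simp
    also have "(T ^^ (n * k)) (f x) = f ((T ^^ (n * k)) x)"
      using funpow_commute_funpow[OF comm, of 1 "n * k" x] by simp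
    also have "leq \<dots> (f ((f ^^ k) x))" using mono[OF Suc] .
    finally show ?case by simp
  qed
  then have "height (half_spaces y) x + int (n * k) \<le> height (half_spaces y) ((f ^^ k) x)"
    using height_funpow_T height_mono order_trans by blast
  moreover have "int k \<le> int (n * k)"
    using \<open>1 \<le> n\<close> by (metis of_nat_mono mult_le_mono1 mult_1)
  ultimately show ?thesis by linarith
qed

lemma height_funpow_le:
  assumes mono: "\<And>a b. leq a b \<Longrightarrow> leq (f a) (f b)" and comm: "f \<circ> T = T \<circ> f"
    and "1 \<le> n" and step: "leq ((T ^^ n) (f x)) x"
  shows "height (half_spaces y) ((f ^^ k) x) + int k \<le> height (half_spaces y) x"
proof -
  have "leq ((T ^^ (n * k)) ((f ^^ k) x)) x"
  proof (induction k)
    case 0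
    then show ?case by (simp add: leq_refl)
  next
    case (Suc k)
    have "(T ^^ (n * Suc k)) ((f ^^ Suc k) x) = (T ^^ (n * k)) ((f ^^ k) ((T ^^ n) (f x)))"
      using funpow_commute_funpow[OF comm, of k n "f x"]
      by (metis funpow_add funpow_Suc_right comp_apply mult_Suc_right add.commute)
    also have "leq \<dots> ((T ^^ (n * k)) ((f ^^ k) x))"
      using funpow_T_leq_iff funpow_preserves_rel[of leq f, OF mono step] by simp
    also have "leq \<dots> x" by (rule Suc)
    finally show ?case by simp
  qed
  then have "height (half_spaces y) ((f ^^ k) x) + int (n * k) \<le> height (half_spaces y) x"
    using height_funpow_T height_mono order_trans by blast
  moreover have "int k \<le> int (n * k)"
    using \<open>1 \<le> n\<close> by (metis of_nat_mono mult_le_mono1 mult_1)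
  ultimately show ?thesis by linarith
qed

lemma unbounded_action:
  assumes "group G" and "dominating_action G act leq T"
  shows "unbounded_action G act (half_spaces y)"
proof -
  obtain g x n where g: "g \<in> carrier G" and "1 \<le> n" and step: "leq ((T ^^ n) x) (act g x)"
    using assms(2) by (auto simp: dominating_action_def)
  have action: "group_action G act" and
    aut: "\<And>h. h \<in> carrier G \<Longrightarrow> order_aut leq (act h) \<and> act h \<circ> T = T \<circ> act h"
    using assms(2) by (auto simp: dominating_action_def aut_action_def)
  have inv_g: "inv\<^bsub>G\<^esub> g \<in> carrier G" using assms(1) g by simp
  have mono: "leq a b \<Longrightarrow> leq (act h a) (act h b)" if "h \<in> carrier G" for h a b
    using aut[OF that] by (simp add: order_aut_def)
  have inv_step: "leq ((T ^^ n) (act (inv\<^bsub>G\<^esub> g) x)) x"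
  proof -
    have "leq (act (inv\<^bsub>G\<^esub> g) ((T ^^ n) x)) (act (inv\<^bsub>G\<^esub> g) (act g x))"
      using mono[OF inv_g step] .
    then show ?thesis
      using funpow_commute_funpow[of "act (inv\<^bsub>G\<^esub> g)" T 1 n x] aut[OF inv_g]
        group_action_inv_apply[OF assms(1) action g]
      by simp
  qed
  let ?h = "\<lambda>i::int. height (half_spaces y) (act (g [^]\<^bsub>G\<^esub> i) x)"
  have "filterlim ?h at_top at_top"
  proof (rule filterlim_at_top_int_linear_lower)
    show "height (half_spaces y) x + int k \<le> ?h (int k)" for k
      using height_funpow_ge[OF mono[OF g] conjunct2[OF aut[OF g]] \<open>1 \<le> n\<close> step]
        group_action_nat_pow[OF assms(1) action g]
      by (simp add: int_pow_int)
  qed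
  moreover have "filterlim ?h at_bot at_bot"
  proof (rule filterlim_at_bot_int_linear_upper)
    show "?h (- int k) + int k \<le> height (half_spaces y) x" for k
      using height_funpow_le[OF mono[OF inv_g] conjunct2[OF aut[OF inv_g]] \<open>1 \<le> n\<close> inv_step]
        group_action_int_pow_neg[OF assms(1) action g]
      by simp
  qed
  ultimately show ?thesis using g unfolding unbounded_action_def by blast
qed

end

theorem proposition1p6:
  fixes leq :: "'a \<Rightarrow> 'a \<Rightarrow> bool" and T :: "'a \<Rightarrow> 'a" and x0 :: 'a
    and G :: "('g, 'b) monoid_scheme" and act :: "'g \<Rightarrow> 'a \<Rightarrow> 'a"
  assumes "complete_qt_triple leq T"
  shows "half_space_order leq (\<lambda>n. {x. leq (tpow T n x0) x})
    \<and> (group G \<and> dominating_action G act leq T \<and> effective_action G act \<longrightarrow>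
         quasi_aut_action G act (\<lambda>n. {x. leq (tpow T n x0) x})
       \<and> unbounded_action G act (\<lambda>n. {x. leq (tpow T n x0) x})
       \<and> quasi_total_order TYPE('a) G (induced_order G act leq))"
proof -
  interpret complete_quasi_total leq T using assms by unfold_locales
  have "quasi_aut_action G act (half_spaces x0) \<and> unbounded_action G act (half_spaces x0)
      \<and> quasi_total_order TYPE('a) G (induced_order G act leq)"
    if "group G" and dominating: "dominating_action G act leq T" and "effective_action G act"
  proof -
    have "aut_action G act leq T" using dominating by (simp add: dominating_action_def)
    then have "group_action G act" and "quasi_aut_action G act (half_spaces x0)"
      by (simp_all add: aut_action_def quasi_aut_action)
    moreover have "unbounded_action G act (half_spaces x0)"
      using unbounded_action[OF \<open>group G\<close> dominating] .
    ultimately show ?thesis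
      using half_space_order \<open>effective_action G act\<close>
      unfolding quasi_total_order_def by blast
  qed
  then show ?thesis using half_space_order unfolding half_spaces_def by blast
qed

end
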